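(* For every integer $n\ge 1$, the number of ordered set partitions of $[n]$ into exactly $n-1$ blocks that avoid the pattern $123$ is $$\operatorname{op}_{n,n-1}(123) = \frac{3(n-1)^2\binom{2n-2}{n-1}}{n(n+1)}.$$
   Context: An ordered set partition of $[n]$ into $k$ blocks is a sequence $B_1/B_2/\cdots/B_k$ of nonempty, pairwise disjoint subsets of $[n]$ whose union is $[n]$; the order of the blocks matters, but not the order of elements within a block. For a permutation $\rho=\rho_1\cdots\rho_m\in\mathcal{S}_m$, an ordered partition $B_1/\cdots/B_k$ contains $\rho$ if there are block indices $i_1<i_2<\cdots<i_m$ and elements $b_j\in B_{i_j}$ such that $b_1\cdots b_m$ is order-isomorphic to $\rho$ (i.e. $b_a<b_c$ iff $\rho_a<\rho_c$); otherwise it avoids $\rho$. $\operatorname{op}_{n,k}(\rho)$ denotes the number of ordered partitions of $[n]$ into $k$ blocks that avoid $\rho$ (so it is $0$ when $k=0<n$). *)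

theory Defs
  imports Complex_Main
begin

definition ordered_set_partitions :: "nat \<Rightarrow> nat \<Rightarrow> nat set list set" where
  "ordered_set_partitions n k =
     {Bs. length Bs = k \<and> (\<forall>i<k. Bs ! i \<noteq> {}) \<and>
          (\<forall>i<k. \<forall>j<k. i \<noteq> j \<longrightarrow> Bs ! i \<inter> Bs ! j = {}) \<and>
          \<Union>(set Bs) = {1..n}}"

text \<open>A permutation rho in S_m, given as the list rho_1 ... rho_m (0-indexed here).\<close>
definition op_contains :: "nat set list \<Rightarrow> nat list \<Rightarrow> bool" where
  "op_contains Bs \<rho> \<longleftrightarrow>
     (\<exists>idx b :: nat \<Rightarrow> nat.
        strict_mono_on {0..<length \<rho>} idx \<and>
        (\<forall>j<length \<rho>. idx j < length Bs \<and> b j \<in> Bs ! idx j) \<and>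
        (\<forall>a<length \<rho>. \<forall>c<length \<rho>. b a < b c \<longleftrightarrow> \<rho> ! a < \<rho> ! c))"

definition op_count :: "nat \<Rightarrow> nat \<Rightarrow> nat list \<Rightarrow> nat" where
  "op_count n k \<rho> = card {Bs \<in> ordered_set_partitions n k. \<not> op_contains Bs \<rho>}"

end

theory Submission
  imports Defs
begin

text \<open>
  A 123-avoiding ordered partition of [m + 1] arises uniquely from an ordered partition of [m]
  by placing the maximum m + 1 either as a new singleton block or into an existing block.
  The maximum can only serve as the 3 of an occurrence of 123, so the result avoids 123 iff the
  original does and the blocks before the new position contain no occurrence of 12.  Refining the
  count by the number t of leading blocks required to avoid 12 therefore gives a linear recurrence
  in m, the number of blocks and t.  For permutations (m elements in m blocks) it is solved by
  ballot numbers; for m + 1 elements in m blocks by an explicit combination of binomial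
  coefficients, whose value at t = 0 is the claimed formula.
\<close>

section \<open>Ordered set partitions and insertion of the maximum\<close>

lemma sorted_wrt_disjnt_iff:
  "sorted_wrt disjnt Bs \<longleftrightarrow> (\<forall>i<length Bs. \<forall>j<length Bs. i \<noteq> j \<longrightarrow> Bs ! i \<inter> Bs ! j = {})"
proof -
  have "Bs ! i \<inter> Bs ! j = {}"
    if "sorted_wrt disjnt Bs" "i < length Bs" "j < length Bs" "i \<noteq> j" for i j
  proof (cases "i < j")
    case True
    then show ?thesis using that sorted_wrt_nth_less[of disjnt Bs i j] by (simp add: disjnt_def)
  next
    case False
    then have "j < i" using that(4) by simp
    then show ?thesis using that sorted_wrt_nth_less[of disjnt Bs j i] by (auto simp: disjnt_def)
  qed
  moreover have "sorted_wrt disjnt Bs"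
    if H: "\<forall>i<length Bs. \<forall>j<length Bs. i \<noteq> j \<longrightarrow> Bs ! i \<inter> Bs ! j = {}"
    unfolding sorted_wrt_iff_nth_less disjnt_def
  proof (intro allI impI)
    fix i j assume "i < j" "j < length Bs"
    then show "Bs ! i \<inter> Bs ! j = {}" using H by simp
  qed
  ultimately show ?thesis by blast
qed

lemma ordered_set_partitions_iff:
  "Bs \<in> ordered_set_partitions n k \<longleftrightarrow>
     length Bs = k \<and> {} \<notin> set Bs \<and> sorted_wrt disjnt Bs \<and> \<Union>(set Bs) = {1..n}"
  unfolding ordered_set_partitions_def sorted_wrt_disjnt_iff in_set_conv_nth by auto

lemma finite_ordered_set_partitions: "finite (ordered_set_partitions m c)"
proof (rule finite_subset)
  show "ordered_set_partitions m c \<subseteq> {Bs. set Bs \<subseteq> Pow {1..m} \<and> length Bs = c}"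
    unfolding ordered_set_partitions_def by auto
  show "finite {Bs. set Bs \<subseteq> Pow {1..m} \<and> length Bs = c}"
    by (rule finite_lists_length_eq) simp
qed

lemma below_Suc_if_ordered_set_partition:
  assumes "Bs \<in> ordered_set_partitions m c"
  shows "\<forall>B\<in>set Bs. \<forall>x\<in>B. x < Suc m"
proof (intro ballI)
  fix B x assume "B \<in> set Bs" "x \<in> B"
  then have "x \<in> \<Union>(set Bs)" by blast
  also have "\<Union>(set Bs) = {1..m}" using assms by (simp add: ordered_set_partitions_iff)
  finally show "x < Suc m" by simp
qed

lemma notin_other_blocks:
  "sorted_wrt disjnt (T @ B # D) \<Longrightarrow> x \<in> B \<Longrightarrow> x \<notin> \<Union>(set (T @ D))"
  by (auto simp: sorted_wrt_append disjnt_def)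

lemma obtain_block_decomposition:
  assumes "p < length Cs"
  obtains T C D where "Cs = T @ C # D" and "p = length T"
  using id_take_nth_drop[OF assms] assms by (metis length_take min_absorb2 less_imp_le)

lemma insert_Suc_eq_atLeastAtMost_iff:
  assumes "Suc m \<notin> U"
  shows "insert (Suc m) U = {1..Suc m} \<longleftrightarrow> U = {1..m}"
proof -
  have "{1..Suc m} = insert (Suc m) {1..m}" by auto
  then show ?thesis using assms insert_ident[of "Suc m" U "{1..m}"] by simp
qed

lemma ordered_set_partitions_singleton_iff:
  assumes "Suc m \<notin> \<Union>(set (T @ D))"
  shows "T @ {Suc m} # D \<in> ordered_set_partitions (Suc m) (Suc c) \<longleftrightarrow>
         T @ D \<in> ordered_set_partitions m c"
proof -
  have "sorted_wrt disjnt (T @ {Suc m} # D) \<longleftrightarrow> sorted_wrt disjnt (T @ D)"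
    using assms by (auto simp: sorted_wrt_append disjnt_def)
  moreover have "\<Union>(set (T @ {Suc m} # D)) = insert (Suc m) (\<Union>(set (T @ D)))" by auto
  ultimately show ?thesis
    using assms insert_Suc_eq_atLeastAtMost_iff[of m "\<Union>(set (T @ D))"]
    unfolding ordered_set_partitions_iff by auto
qed

lemma ordered_set_partitions_insert_iff:
  assumes "Suc m \<notin> \<Union>(set (T @ B # D))" and "B \<noteq> {}"
  shows "T @ insert (Suc m) B # D \<in> ordered_set_partitions (Suc m) c \<longleftrightarrow>
         T @ B # D \<in> ordered_set_partitions m c"
proof -
  have "sorted_wrt disjnt (T @ insert (Suc m) B # D) \<longleftrightarrow> sorted_wrt disjnt (T @ B # D)"
    using assms(1) by (auto simp: sorted_wrt_append disjnt_def)
  moreover have "\<Union>(set (T @ insert (Suc m) B # D)) = insert (Suc m) (\<Union>(set (T @ B # D)))" by auto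
  ultimately show ?thesis
    using assms insert_Suc_eq_atLeastAtMost_iff[of m "\<Union>(set (T @ B # D))"]
    unfolding ordered_set_partitions_iff by auto
qed

lemma ordered_set_partitions_singleton_image:
  assumes "p \<le> c"
  shows "{Cs \<in> ordered_set_partitions (Suc m) (Suc c). Cs ! p = {Suc m}} =
         (\<lambda>Bs. take p Bs @ {Suc m} # drop p Bs) ` ordered_set_partitions m c"
proof (intro equalityI subsetI)
  fix Cs assume "Cs \<in> {Cs \<in> ordered_set_partitions (Suc m) (Suc c). Cs ! p = {Suc m}}"
  then have P: "Cs \<in> ordered_set_partitions (Suc m) (Suc c)" and Cp: "Cs ! p = {Suc m}" by auto
  then have "p < length Cs" using assms by (simp add: ordered_set_partitions_iff)
  then obtain T C D where Cs: "Cs = T @ C # D" and p: "p = length T"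
    by (rule obtain_block_decomposition)
  have P': "T @ {Suc m} # D \<in> ordered_set_partitions (Suc m) (Suc c)"
    using P Cp unfolding Cs p by simp
  then have "Suc m \<notin> \<Union>(set (T @ D))"
    using notin_other_blocks[of T "{Suc m}" D] by (simp add: ordered_set_partitions_iff)
  then have "T @ D \<in> ordered_set_partitions m c"
    using P' ordered_set_partitions_singleton_iff by blast
  moreover have "Cs = take p (T @ D) @ {Suc m} # drop p (T @ D)"
    using Cp unfolding Cs p by simp
  ultimately show "Cs \<in> (\<lambda>Bs. take p Bs @ {Suc m} # drop p Bs) ` ordered_set_partitions m c"
    by blast
next
  fix Cs assume "Cs \<in> (\<lambda>Bs. take p Bs @ {Suc m} # drop p Bs) ` ordered_set_partitions m c"
  then obtain Bs where P: "Bs \<in> ordered_set_partitions m c" and Cs: "Cs = take p Bs @ {Suc m} # drop p Bs"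
    by blast
  have "length Bs = c" using P by (simp add: ordered_set_partitions_iff)
  moreover have "Suc m \<notin> \<Union>(set (take p Bs @ drop p Bs))"
    using below_Suc_if_ordered_set_partition[OF P] by auto
  ultimately show "Cs \<in> {Cs \<in> ordered_set_partitions (Suc m) (Suc c). Cs ! p = {Suc m}}"
    using P assms ordered_set_partitions_singleton_iff[of m "take p Bs" "drop p Bs" c]
    unfolding Cs by (simp add: nth_append)
qed

lemma ordered_set_partitions_adjoin_image:
  assumes "p < c"
  shows "{Cs \<in> ordered_set_partitions (Suc m) c. Suc m \<in> Cs ! p \<and> Cs ! p \<noteq> {Suc m}} =
         (\<lambda>Bs. Bs[p := insert (Suc m) (Bs ! p)]) ` ordered_set_partitions m c"
proof (intro equalityI subsetI)
  fix Cs assume "Cs \<in> {Cs \<in> ordered_set_partitions (Suc m) c. Suc m \<in> Cs ! p \<and> Cs ! p \<noteq> {Suc m}}"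
  then have P: "Cs \<in> ordered_set_partitions (Suc m) c" and N: "Suc m \<in> Cs ! p" "Cs ! p \<noteq> {Suc m}"
    by auto
  then have "p < length Cs" using assms by (simp add: ordered_set_partitions_iff)
  then obtain T C D where Cs: "Cs = T @ C # D" and p: "p = length T"
    by (rule obtain_block_decomposition)
  have C: "Suc m \<in> C" "C \<noteq> {Suc m}" using N unfolding Cs p by simp_all
  have "sorted_wrt disjnt (T @ C # D)" using P unfolding Cs ordered_set_partitions_iff by blast
  then have disj: "Suc m \<notin> \<Union>(set (T @ D))" using C(1) by (rule notin_other_blocks)
  define B where "B = C - {Suc m}"
  have B: "C = insert (Suc m) B" "B \<noteq> {}" "Suc m \<notin> B" using C by (auto simp: B_def)
  have "T @ B # D \<in> ordered_set_partitions m c"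
    using P disj B ordered_set_partitions_insert_iff[of m T B D c] unfolding Cs by simp
  moreover have "Cs = (T @ B # D)[p := insert (Suc m) ((T @ B # D) ! p)]"
    unfolding Cs p B(1) by simp
  ultimately show "Cs \<in> (\<lambda>Bs. Bs[p := insert (Suc m) (Bs ! p)]) ` ordered_set_partitions m c"
    by blast
next
  fix Cs assume "Cs \<in> (\<lambda>Bs. Bs[p := insert (Suc m) (Bs ! p)]) ` ordered_set_partitions m c"
  then obtain Bs where P: "Bs \<in> ordered_set_partitions m c" and Cs: "Cs = Bs[p := insert (Suc m) (Bs ! p)]"
    by blast
  then have "p < length Bs" using assms by (simp add: ordered_set_partitions_iff)
  then obtain T B D where Bs: "Bs = T @ B # D" and p: "p = length T"
    by (rule obtain_block_decomposition)
  have "Suc m \<notin> \<Union>(set (T @ B # D))" "B \<noteq> {}"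
    using below_Suc_if_ordered_set_partition[OF P] P unfolding Bs by (auto simp: ordered_set_partitions_iff)
  then show "Cs \<in> {Cs \<in> ordered_set_partitions (Suc m) c. Suc m \<in> Cs ! p \<and> Cs ! p \<noteq> {Suc m}}"
    using P ordered_set_partitions_insert_iff[of m T B D c] unfolding Cs Bs p by auto
qed

section \<open>Pattern avoidance under insertion of the maximum\<close>

definition avoids_123 :: "nat set list \<Rightarrow> bool" where
  "avoids_123 Bs \<longleftrightarrow> \<not> (\<exists>i j l x y z. i < j \<and> j < l \<and> l < length Bs \<and>
      x \<in> Bs ! i \<and> y \<in> Bs ! j \<and> z \<in> Bs ! l \<and> x < y \<and> y < z)"

text \<open>The conjunct t \<le> length Bs makes the refined counts vanish once t exceeds the number of blocks.\<close>

definition prefix_avoids_12 :: "nat \<Rightarrow> nat set list \<Rightarrow> bool" where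
  "prefix_avoids_12 t Bs \<longleftrightarrow> t \<le> length Bs \<and>
     \<not> (\<exists>i j x y. i < j \<and> j < t \<and> x \<in> Bs ! i \<and> y \<in> Bs ! j \<and> x < y)"

lemma not_avoids_123I:
  "i < j \<Longrightarrow> j < l \<Longrightarrow> l < length Bs \<Longrightarrow> x \<in> Bs ! i \<Longrightarrow> y \<in> Bs ! j \<Longrightarrow> z \<in> Bs ! l \<Longrightarrow>
   x < y \<Longrightarrow> y < z \<Longrightarrow> \<not> avoids_123 Bs"
  unfolding avoids_123_def by blast

lemma op_contains_123_iff: "op_contains Bs [1, 2, 3] \<longleftrightarrow> \<not> avoids_123 Bs"
proof
  have len: "length [1::nat, 2, 3] = 3" by simp
  assume "op_contains Bs [1, 2, 3]"
  then obtain idx b :: "nat \<Rightarrow> nat" where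
    mono: "strict_mono_on {0..<3} idx" and
    mem: "\<forall>j<3. idx j < length Bs \<and> b j \<in> Bs ! idx j" and
    ord: "\<forall>a<3. \<forall>c<3. b a < b c \<longleftrightarrow> [1::nat, 2, 3] ! a < [1, 2, 3] ! c"
    unfolding op_contains_def len by blast
  have "idx 0 < idx 1" "idx 1 < idx 2" using mono unfolding strict_mono_on_def by auto
  moreover have "b 0 < b 1" "b 1 < b 2" using ord[rule_format, of 0 1] ord[rule_format, of 1 2] by auto
  moreover have "idx 2 < length Bs" "b 0 \<in> Bs ! idx 0" "b 1 \<in> Bs ! idx 1" "b 2 \<in> Bs ! idx 2"
    using mem by auto
  ultimately show "\<not> avoids_123 Bs" by (intro not_avoids_123I)
next
  have len: "length [1::nat, 2, 3] = 3" by simp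
  assume "\<not> avoids_123 Bs"
  then obtain i j l x y z where
    ijl: "i < j" "j < l" "l < length Bs" and xyz: "x \<in> Bs ! i" "y \<in> Bs ! j" "z \<in> Bs ! l" "x < y" "y < z"
    unfolding avoids_123_def by blast
  define idx where "idx k = (if k = 0 then i else if k = 1 then j else l)" for k :: nat
  define b where "b k = (if k = 0 then x else if k = 1 then y else z)" for k :: nat
  have three: "k < 3 \<longleftrightarrow> k = 0 \<or> k = 1 \<or> k = 2" for k :: nat by auto
  have "strict_mono_on {0..<3} idx"
    unfolding strict_mono_on_def using ijl by (auto simp: three idx_def)
  moreover have "\<forall>k<3. idx k < length Bs \<and> b k \<in> Bs ! idx k"
    using ijl xyz by (auto simp: three idx_def b_def)
  moreover have "\<forall>a<3. \<forall>c<3. b a < b c \<longleftrightarrow> [1::nat, 2, 3] ! a < [1, 2, 3] ! c"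
    using xyz by (auto simp: three b_def)
  ultimately show "op_contains Bs [1, 2, 3]" unfolding op_contains_def len by blast
qed

lemma not_prefix_avoids_12I:
  "i < j \<Longrightarrow> j < t \<Longrightarrow> x \<in> Bs ! i \<Longrightarrow> y \<in> Bs ! j \<Longrightarrow> x < y \<Longrightarrow> \<not> prefix_avoids_12 t Bs"
  unfolding prefix_avoids_12_def by blast

lemma prefix_avoids_12_length: "prefix_avoids_12 t Bs \<Longrightarrow> t \<le> length Bs"
  by (simp add: prefix_avoids_12_def)

lemma prefix_avoids_12_0 [simp]: "prefix_avoids_12 0 Bs"
  by (simp add: prefix_avoids_12_def)

lemma prefix_avoids_12_mono: "prefix_avoids_12 t Bs \<Longrightarrow> s \<le> t \<Longrightarrow> prefix_avoids_12 s Bs"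
  unfolding prefix_avoids_12_def by (meson le_trans less_le_trans)

lemma avoids_123_blockwise_subset:
  assumes len: "length Bs = length Cs" and sub: "\<forall>k<length Bs. Bs ! k \<subseteq> Cs ! k"
    and av: "avoids_123 Cs"
  shows "avoids_123 Bs"
  unfolding avoids_123_def
proof (intro notI, elim exE conjE)
  fix i j l x y z
  assume "i < j" "j < l" "l < length Bs" "x \<in> Bs ! i" "y \<in> Bs ! j" "z \<in> Bs ! l" "x < y" "y < z"
  then show False
    using av not_avoids_123I[of i j l Cs x y z] len sub[rule_format, of i] sub[rule_format, of j]
      sub[rule_format, of l]
    by auto
qed

lemma prefix_avoids_12_blockwise_subset:
  assumes len: "length Bs = length Cs" and sub: "\<forall>k<length Bs. Bs ! k \<subseteq> Cs ! k"
    and pre: "prefix_avoids_12 t Cs"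
  shows "prefix_avoids_12 t Bs"
  unfolding prefix_avoids_12_def
proof (intro conjI notI, use len prefix_avoids_12_length[OF pre] in simp, elim exE conjE)
  fix i j x y
  assume "i < j" "j < t" "x \<in> Bs ! i" "y \<in> Bs ! j" "x < y"
  moreover have "t \<le> length Bs" using len prefix_avoids_12_length[OF pre] by simp
  ultimately show False
    using pre not_prefix_avoids_12I[of i j t x Cs y] sub[rule_format, of i] sub[rule_format, of j]
    by auto
qed

lemma nth_adjoin_iff:
  "p < length Bs \<Longrightarrow> k < length Bs \<Longrightarrow>
   x \<in> Bs[p := insert N (Bs ! p)] ! k \<longleftrightarrow> x \<in> Bs ! k \<or> (k = p \<and> x = N)"
  by (cases "k = p") auto

lemma avoids_123_adjoin_max:
  assumes p: "p < length Bs" and below: "\<forall>B\<in>set Bs. \<forall>x\<in>B. x < N"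
  shows "avoids_123 (Bs[p := insert N (Bs ! p)]) \<longleftrightarrow> avoids_123 Bs \<and> prefix_avoids_12 p Bs"
    (is "avoids_123 ?Cs \<longleftrightarrow> _")
proof -
  have lt: "x < N" if "k < length Bs" "x \<in> Bs ! k" for k x
    using below that nth_mem by blast
  have sub: "x \<in> ?Cs ! k" if "k < length Bs" "x \<in> Bs ! k" for k x
    using that p by (simp add: nth_adjoin_iff)
  have N: "N \<in> ?Cs ! p" using p by simp
  show ?thesis
  proof
    assume av: "avoids_123 ?Cs"
    have "avoids_123 Bs" by (rule avoids_123_blockwise_subset[OF _ _ av]) (use sub in auto)
    moreover have "prefix_avoids_12 p Bs"
      unfolding prefix_avoids_12_def
    proof (intro conjI notI, use p in simp, elim exE conjE)
      fix i j x y
      assume "i < j" "j < p" "x \<in> Bs ! i" "y \<in> Bs ! j" "x < y"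
      then show False
        using av not_avoids_123I[of i j p ?Cs x y N] sub[of i x] sub[of j y] lt[of j y] N p by simp
    qed
    ultimately show "avoids_123 Bs \<and> prefix_avoids_12 p Bs" ..
  next
    assume "avoids_123 Bs \<and> prefix_avoids_12 p Bs"
    then have av: "avoids_123 Bs" and pre: "prefix_avoids_12 p Bs" by auto
    show "avoids_123 ?Cs"
      unfolding avoids_123_def
    proof (intro notI, elim exE conjE)
      fix i j l x y z
      assume ijl: "i < j" "j < l" "l < length ?Cs"
        and xyz: "x \<in> ?Cs ! i" "y \<in> ?Cs ! j" "z \<in> ?Cs ! l" "x < y" "y < z"
      have "z \<in> Bs ! l \<or> l = p \<and> z = N" using xyz(3) ijl p by (simp add: nth_adjoin_iff)
      then have "z \<le> N" using lt[of l z] ijl by auto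
      then have x: "x \<in> Bs ! i" and y: "y \<in> Bs ! j"
        using xyz ijl p by (auto simp: nth_adjoin_iff)
      show False
      proof (cases "z \<in> Bs ! l")
        case True
        then show False using av not_avoids_123I[of i j l Bs x y z] ijl x y xyz(4,5) by simp
      next
        case False
        then have "l = p" using xyz(3) ijl p by (simp add: nth_adjoin_iff)
        then show False using pre not_prefix_avoids_12I[of i j p x Bs y] ijl x y xyz(4) by simp
      qed
    qed
  qed
qed

lemma prefix_avoids_12_adjoin_max:
  assumes p: "p < length Bs" and below: "\<forall>B\<in>set Bs. \<forall>x\<in>B. x < N"
  shows "prefix_avoids_12 t (Bs[p := insert N (Bs ! p)]) \<longleftrightarrow>
         prefix_avoids_12 t Bs \<and> (t \<le> p \<or> (\<forall>i<p. Bs ! i = {}))"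
    (is "prefix_avoids_12 t ?Cs \<longleftrightarrow> _")
proof -
  have lt: "x < N" if "k < length Bs" "x \<in> Bs ! k" for k x
    using below that nth_mem by blast
  have sub: "x \<in> ?Cs ! k" if "k < length Bs" "x \<in> Bs ! k" for k x
    using that p by (simp add: nth_adjoin_iff)
  have N: "N \<in> ?Cs ! p" using p by simp
  show ?thesis
  proof
    assume pre: "prefix_avoids_12 t ?Cs"
    have "prefix_avoids_12 t Bs" by (rule prefix_avoids_12_blockwise_subset[OF _ _ pre]) (use sub in auto)
    moreover have "t \<le> p \<or> (\<forall>i<p. Bs ! i = {})"
    proof (rule ccontr)
      assume "\<not> (t \<le> p \<or> (\<forall>i<p. Bs ! i = {}))"
      then obtain i x where "p < t" "i < p" "x \<in> Bs ! i" by auto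
      then show False
        using pre not_prefix_avoids_12I[of i p t x ?Cs N] sub[of i x] lt[of i x] N p by simp
    qed
    ultimately show "prefix_avoids_12 t Bs \<and> (t \<le> p \<or> (\<forall>i<p. Bs ! i = {}))" ..
  next
    assume "prefix_avoids_12 t Bs \<and> (t \<le> p \<or> (\<forall>i<p. Bs ! i = {}))"
    then have pre: "prefix_avoids_12 t Bs" and cond: "t \<le> p \<or> (\<forall>i<p. Bs ! i = {})" by auto
    have t: "t \<le> length Bs" using pre by (rule prefix_avoids_12_length)
    show "prefix_avoids_12 t ?Cs"
      unfolding prefix_avoids_12_def
    proof (intro conjI notI, use t in simp, elim exE conjE)
      fix i j x y
      assume ij: "i < j" "j < t" and xy: "x \<in> ?Cs ! i" "y \<in> ?Cs ! j" "x < y"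
      have "y \<in> Bs ! j \<or> j = p \<and> y = N" using xy(2) ij t p by (simp add: nth_adjoin_iff)
      then have "y \<le> N" using lt[of j y] ij t by auto
      then have x: "x \<in> Bs ! i" using xy(1,3) ij t p by (auto simp: nth_adjoin_iff)
      show False
      proof (cases "y \<in> Bs ! j")
        case True
        then show False using pre not_prefix_avoids_12I[of i j t x Bs y] ij x xy(3) by simp
      next
        case False
        then have "j = p" using xy(2) ij t p by (simp add: nth_adjoin_iff)
        then show False using cond ij x by auto
      qed
    qed
  qed
qed

lemma nth_insert_empty_block:
  fixes T D :: "nat set list"
  defines "s \<equiv> length T"
  shows "k < length (T @ D) \<Longrightarrow> (T @ {} # D) ! (if k < s then k else Suc k) = (T @ D) ! k"
    and "k < Suc (length (T @ D)) \<Longrightarrow> k \<noteq> s \<Longrightarrow>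
         (T @ {} # D) ! k = (T @ D) ! (if k < s then k else k - 1)"
    and "(T @ {} # D) ! s = {}"
  unfolding s_def by (auto simp: nth_append nth_Cons')

lemma avoids_123_insert_empty_block:
  "avoids_123 (T @ {} # D) \<longleftrightarrow> avoids_123 (T @ D)"
proof
  let ?s = "length T"
  let ?g = "\<lambda>k. if k < ?s then k else Suc k"
  assume av: "avoids_123 (T @ {} # D)"
  show "avoids_123 (T @ D)"
    unfolding avoids_123_def
  proof (intro notI, elim exE conjE)
    fix i j l x y z
    assume "i < j" "j < l" "l < length (T @ D)" "x \<in> (T @ D) ! i" "y \<in> (T @ D) ! j" "z \<in> (T @ D) ! l"
      "x < y" "y < z"
    then show False
      using av not_avoids_123I[of "?g i" "?g j" "?g l" "T @ {} # D" x y z]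
        nth_insert_empty_block(1)[of i T D] nth_insert_empty_block(1)[of j T D]
        nth_insert_empty_block(1)[of l T D]
      by (simp split: if_splits)
  qed
next
  let ?s = "length T"
  let ?f = "\<lambda>k. if k < ?s then k else k - 1"
  assume av: "avoids_123 (T @ D)"
  show "avoids_123 (T @ {} # D)"
    unfolding avoids_123_def
  proof (intro notI, elim exE conjE)
    fix i j l x y z
    assume ijl: "i < j" "j < l" "l < length (T @ {} # D)"
      and xyz: "x \<in> (T @ {} # D) ! i" "y \<in> (T @ {} # D) ! j" "z \<in> (T @ {} # D) ! l" "x < y" "y < z"
    then have ne: "i \<noteq> ?s" "j \<noteq> ?s" "l \<noteq> ?s" using nth_insert_empty_block(3)[of T D] by auto
    then have "?f i < ?f j" "?f j < ?f l" "?f l < length (T @ D)" using ijl by auto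
    moreover have "x \<in> (T @ D) ! ?f i" "y \<in> (T @ D) ! ?f j" "z \<in> (T @ D) ! ?f l"
      using xyz ijl ne nth_insert_empty_block(2)[of _ T D] by simp_all
    ultimately show False
      using av not_avoids_123I[of "?f i" "?f j" "?f l" "T @ D" x y z] xyz by blast
  qed
qed

lemma prefix_avoids_12_insert_empty_block:
  "prefix_avoids_12 t (T @ {} # D) \<longleftrightarrow>
   prefix_avoids_12 (if t \<le> length T then t else t - 1) (T @ D)"
    (is "_ \<longleftrightarrow> prefix_avoids_12 ?t _")
proof -
  let ?s = "length T"
  have len: "t \<le> length (T @ {} # D) \<longleftrightarrow> ?t \<le> length (T @ D)" by auto
  show ?thesis
  proof
    let ?g = "\<lambda>k. if k < ?s then k else Suc k"
    assume pre: "prefix_avoids_12 t (T @ {} # D)"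
    show "prefix_avoids_12 ?t (T @ D)"
      unfolding prefix_avoids_12_def
    proof (intro conjI notI, use len prefix_avoids_12_length[OF pre] in simp, elim exE conjE)
      fix i j x y
      assume ij: "i < j" "j < ?t" and xy: "x \<in> (T @ D) ! i" "y \<in> (T @ D) ! j" "x < y"
      have "j < length (T @ D)" using ij len prefix_avoids_12_length[OF pre] by simp
      then have "x \<in> (T @ {} # D) ! ?g i" "y \<in> (T @ {} # D) ! ?g j"
        using ij xy nth_insert_empty_block(1)[of _ T D] by simp_all
      moreover have "?g i < ?g j" using ij by simp
      moreover have "?g j < t" by (cases "t \<le> length T") (use ij in auto)
      ultimately show False
        using pre not_prefix_avoids_12I[of "?g i" "?g j" t x "T @ {} # D" y] xy(3) by blast
    qed
  next
    let ?f = "\<lambda>k. if k < ?s then k else k - 1"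
    assume pre: "prefix_avoids_12 ?t (T @ D)"
    show "prefix_avoids_12 t (T @ {} # D)"
      unfolding prefix_avoids_12_def
    proof (intro conjI notI, use len prefix_avoids_12_length[OF pre] in simp, elim exE conjE)
      fix i j x y
      assume ij: "i < j" "j < t" and xy: "x \<in> (T @ {} # D) ! i" "y \<in> (T @ {} # D) ! j" "x < y"
      have jt: "j < length (T @ {} # D)" using ij len prefix_avoids_12_length[OF pre] by simp
      have ne: "i \<noteq> ?s" "j \<noteq> ?s" using xy nth_insert_empty_block(3)[of T D] by auto
      then have "?f i < ?f j" "?f j < ?t" using ij by auto
      moreover have "x \<in> (T @ D) ! ?f i" "y \<in> (T @ D) ! ?f j"
        using xy ij jt ne nth_insert_empty_block(2)[of _ T D] by simp_all
      ultimately show False using pre not_prefix_avoids_12I[of "?f i" "?f j" ?t x "T @ D" y] xy(3) by blast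
    qed
  qed
qed

lemma prefix_blocks_empty_iff_Nil:
  assumes "{} \<notin> set (T @ Bs)"
  shows "(\<forall>i<length T. (T @ Bs) ! i = {}) \<longleftrightarrow> T = []"
  using assms by (cases T) auto

text \<open>A new singleton block {N} is treated as N adjoined to a freshly inserted empty block.\<close>

lemma avoids_123_prefix_singleton_max_iff:
  assumes P: "T @ D \<in> ordered_set_partitions m c"
  shows "avoids_123 (T @ {Suc m} # D) \<and> prefix_avoids_12 (Suc t) (T @ {Suc m} # D) \<longleftrightarrow>
         avoids_123 (T @ D) \<and>
         (if T = [] then prefix_avoids_12 t (T @ D) else t < length T \<and> prefix_avoids_12 (length T) (T @ D))"
proof -
  let ?E = "T @ {} # D"
  have below: "\<forall>B\<in>set ?E. \<forall>x\<in>B. x < Suc m"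
    using below_Suc_if_ordered_set_partition[OF P] by auto
  have E: "T @ {Suc m} # D = ?E[length T := insert (Suc m) (?E ! length T)]" by simp
  have p: "length T < length ?E" by simp
  have empty: "(\<forall>i<length T. ?E ! i = {}) \<longleftrightarrow> T = []"
    using P prefix_blocks_empty_iff_Nil[of T D] by (auto simp: ordered_set_partitions_iff nth_append)
  show ?thesis
    unfolding E avoids_123_adjoin_max[OF p below] prefix_avoids_12_adjoin_max[OF p below] empty
      avoids_123_insert_empty_block prefix_avoids_12_insert_empty_block
    using prefix_avoids_12_mono[of "length T" "T @ D" "Suc t"] by auto
qed

lemma avoids_123_prefix_adjoin_max_iff:
  assumes P: "T @ B # D \<in> ordered_set_partitions m c"
  shows "avoids_123 (T @ insert (Suc m) B # D) \<and> prefix_avoids_12 (Suc t) (T @ insert (Suc m) B # D) \<longleftrightarrow>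
         avoids_123 (T @ B # D) \<and>
         (if T = [] then prefix_avoids_12 (Suc t) (T @ B # D)
          else t < length T \<and> prefix_avoids_12 (length T) (T @ B # D))"
proof -
  let ?E = "T @ B # D"
  have below: "\<forall>B\<in>set ?E. \<forall>x\<in>B. x < Suc m"
    using below_Suc_if_ordered_set_partition[OF P] .
  have E: "T @ insert (Suc m) B # D = ?E[length T := insert (Suc m) (?E ! length T)]" by simp
  have p: "length T < length ?E" by simp
  have empty: "(\<forall>i<length T. ?E ! i = {}) \<longleftrightarrow> T = []"
    using P prefix_blocks_empty_iff_Nil[of T "B # D"] by (auto simp: ordered_set_partitions_iff)
  show ?thesis
    unfolding E avoids_123_adjoin_max[OF p below] prefix_avoids_12_adjoin_max[OF p below] empty
    using prefix_avoids_12_mono[of "length T" ?E "Suc t"] by auto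
qed

section \<open>The refined counts and their recurrence\<close>

definition avoiders :: "nat \<Rightarrow> nat \<Rightarrow> nat \<Rightarrow> nat set list set" where
  "avoiders m c t = {Bs \<in> ordered_set_partitions m c. avoids_123 Bs \<and> prefix_avoids_12 t Bs}"

definition num_avoiders :: "nat \<Rightarrow> nat \<Rightarrow> nat \<Rightarrow> nat" where
  "num_avoiders m c t = card (avoiders m c t)"

lemma op_count_123_eq_num_avoiders: "op_count n k [1, 2, 3] = num_avoiders n k 0"
  unfolding op_count_def num_avoiders_def avoiders_def op_contains_123_iff by simp

lemma card_filter_image:
  assumes "inj_on f A"
  shows "card {y \<in> f ` A. P y} = card {x \<in> A. P (f x)}"
proof -
  have "{y \<in> f ` A. P y} = f ` {x \<in> A. P (f x)}" by auto
  then show ?thesis using assms by (simp add: card_image inj_on_subset)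
qed

lemma card_avoiders_singleton_at:
  assumes "p \<le> c"
  shows "card {Cs \<in> avoiders (Suc m) (Suc c) (Suc t). Cs ! p = {Suc m}} =
         (if p = 0 then num_avoiders m c t else if t < p then num_avoiders m c p else 0)"
proof -
  let ?f = "\<lambda>Bs. take p Bs @ {Suc m} # drop p Bs"
  let ?Q = "\<lambda>Cs. avoids_123 Cs \<and> prefix_avoids_12 (Suc t) Cs"
  have len: "length Bs = c" if "Bs \<in> ordered_set_partitions m c" for Bs
    using that by (simp add: ordered_set_partitions_iff)
  have inj: "inj_on ?f (ordered_set_partitions m c)"
    by (rule inj_on_inverseI[where g = "\<lambda>Cs. take p Cs @ drop (Suc p) Cs"]) (use len assms in simp)
  have "{Cs \<in> avoiders (Suc m) (Suc c) (Suc t). Cs ! p = {Suc m}} = {Cs \<in> ?f ` ordered_set_partitions m c. ?Q Cs}"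
    using ordered_set_partitions_singleton_image[OF assms, of m] by (auto simp: avoiders_def)
  then have "card {Cs \<in> avoiders (Suc m) (Suc c) (Suc t). Cs ! p = {Suc m}} =
             card {Bs \<in> ordered_set_partitions m c. ?Q (?f Bs)}"
    using card_filter_image[OF inj] by simp
  also have "{Bs \<in> ordered_set_partitions m c. ?Q (?f Bs)} =
             (if p = 0 then avoiders m c t else if t < p then avoiders m c p else {})"
  proof -
    have "?Q (?f Bs) \<longleftrightarrow> avoids_123 Bs \<and> (if p = 0 then prefix_avoids_12 t Bs else t < p \<and> prefix_avoids_12 p Bs)"
      if "Bs \<in> ordered_set_partitions m c" for Bs
    proof -
      have "take p Bs = [] \<longleftrightarrow> p = 0" "length (take p Bs) = p" using len[OF that] assms by auto
      then show ?thesis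
        using avoids_123_prefix_singleton_max_iff[of "take p Bs" "drop p Bs" m c t] that by simp
    qed
    then have "{Bs \<in> ordered_set_partitions m c. ?Q (?f Bs)} = {Bs \<in> ordered_set_partitions m c.
        avoids_123 Bs \<and> (if p = 0 then prefix_avoids_12 t Bs else t < p \<and> prefix_avoids_12 p Bs)}"
      by blast
    then show ?thesis by (auto simp: avoiders_def)
  qed
  finally show ?thesis by (simp add: num_avoiders_def)
qed

lemma card_avoiders_adjoin_at:
  assumes "p < c"
  shows "card {Cs \<in> avoiders (Suc m) c (Suc t). Suc m \<in> Cs ! p \<and> Cs ! p \<noteq> {Suc m}} =
         (if p = 0 then num_avoiders m c (Suc t) else if t < p then num_avoiders m c p else 0)"
proof -
  let ?f = "\<lambda>Bs. Bs[p := insert (Suc m) (Bs ! p)]"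
  let ?Q = "\<lambda>Cs. avoids_123 Cs \<and> prefix_avoids_12 (Suc t) Cs"
  have len: "length Bs = c" if "Bs \<in> ordered_set_partitions m c" for Bs
    using that by (simp add: ordered_set_partitions_iff)
  have "Suc m \<notin> Bs ! p" if "Bs \<in> ordered_set_partitions m c" for Bs
    using below_Suc_if_ordered_set_partition[OF that] len[OF that] assms nth_mem by blast
  then have inj: "inj_on ?f (ordered_set_partitions m c)"
    by (intro inj_on_inverseI[where g = "\<lambda>Cs. Cs[p := Cs ! p - {Suc m}]"]) (use len assms in simp)
  have "{Cs \<in> avoiders (Suc m) c (Suc t). Suc m \<in> Cs ! p \<and> Cs ! p \<noteq> {Suc m}} =
        {Cs \<in> ?f ` ordered_set_partitions m c. ?Q Cs}"
    using ordered_set_partitions_adjoin_image[OF assms, of m] by (auto simp: avoiders_def)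
  then have "card {Cs \<in> avoiders (Suc m) c (Suc t). Suc m \<in> Cs ! p \<and> Cs ! p \<noteq> {Suc m}} =
             card {Bs \<in> ordered_set_partitions m c. ?Q (?f Bs)}"
    using card_filter_image[OF inj] by simp
  also have "{Bs \<in> ordered_set_partitions m c. ?Q (?f Bs)} =
             (if p = 0 then avoiders m c (Suc t) else if t < p then avoiders m c p else {})"
  proof -
    have "?Q (?f Bs) \<longleftrightarrow>
          avoids_123 Bs \<and> (if p = 0 then prefix_avoids_12 (Suc t) Bs else t < p \<and> prefix_avoids_12 p Bs)"
      if P: "Bs \<in> ordered_set_partitions m c" for Bs
    proof -
      have "p < length Bs" using len[OF P] assms by simp
      then obtain T B D where Bs: "Bs = T @ B # D" and p: "p = length T"
        by (rule obtain_block_decomposition)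
      then show ?thesis
        using avoids_123_prefix_adjoin_max_iff[of T B D m c t] P by auto
    qed
    then have "{Bs \<in> ordered_set_partitions m c. ?Q (?f Bs)} = {Bs \<in> ordered_set_partitions m c.
        avoids_123 Bs \<and> (if p = 0 then prefix_avoids_12 (Suc t) Bs else t < p \<and> prefix_avoids_12 p Bs)}"
      by blast
    then show ?thesis by (auto simp: avoiders_def)
  qed
  finally show ?thesis by (simp add: num_avoiders_def)
qed

lemma sum_if_zero_or_above:
  fixes X :: "'a :: comm_monoid_add"
  shows "(\<Sum>p\<le>c. if p = 0 then X else if t < p then Y p else 0) = X + (\<Sum>p = Suc t..c. Y p)"
proof -
  have "{..c} = insert 0 {Suc 0..c}" by auto
  then have "(\<Sum>p\<le>c. if p = 0 then X else if t < p then Y p else 0) =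
             X + (\<Sum>p = Suc 0..c. if t < p then Y p else 0)"
    by (simp add: sum.insert_if)
  also have "(\<Sum>p = Suc 0..c. if t < p then Y p else 0) = (\<Sum>p\<in>{p \<in> {Suc 0..c}. t < p}. Y p)"
    by (rule sum.inter_filter[symmetric]) simp
  also have "{p \<in> {Suc 0..c}. t < p} = {Suc t..c}" by auto
  finally show ?thesis .
qed

theorem num_avoiders_Suc_Suc_Suc:
  "num_avoiders (Suc m) (Suc c) (Suc t) =
     num_avoiders m c t + num_avoiders m (Suc c) (Suc t) +
     (\<Sum>p = Suc t..c. num_avoiders m c p + num_avoiders m (Suc c) p)"
proof -
  let ?A = "avoiders (Suc m) (Suc c) (Suc t)"
  define Singleton where "Singleton p = {Cs \<in> ?A. Cs ! p = {Suc m}}" for p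
  define Adjoined where "Adjoined p = {Cs \<in> ?A. Suc m \<in> Cs ! p \<and> Cs ! p \<noteq> {Suc m}}" for p
  have fin: "finite (Singleton p)" "finite (Adjoined p)" for p
    using finite_ordered_set_partitions by (auto simp: Singleton_def Adjoined_def avoiders_def)
  have max_block: "\<exists>p\<le>c. Suc m \<in> Cs ! p" if "Cs \<in> ?A" for Cs
  proof -
    have "Suc m \<in> \<Union>(set Cs)" "length Cs = Suc c"
      using that by (auto simp: avoiders_def ordered_set_partitions_iff)
    then show ?thesis by (auto simp: in_set_conv_nth less_Suc_eq_le)
  qed
  have unique_block: "p = q" if "Cs \<in> ?A" "p \<le> c" "q \<le> c" "Suc m \<in> Cs ! p" "Suc m \<in> Cs ! q" for Cs p q
    using that unfolding avoiders_def ordered_set_partitions_def less_Suc_eq_le by blast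
  have "?A = (\<Union>p\<le>c. Singleton p \<union> Adjoined p)"
    using max_block by (auto simp: Singleton_def Adjoined_def)
  then have "num_avoiders (Suc m) (Suc c) (Suc t) = card (\<Union>p\<le>c. Singleton p \<union> Adjoined p)"
    by (simp add: num_avoiders_def)
  also have "\<dots> = (\<Sum>p\<le>c. card (Singleton p) + card (Adjoined p))"
  proof (subst card_UN_disjoint)
    show "\<forall>p\<in>{..c}. \<forall>q\<in>{..c}. p \<noteq> q \<longrightarrow> (Singleton p \<union> Adjoined p) \<inter> (Singleton q \<union> Adjoined q) = {}"
      using unique_block by (auto simp: Singleton_def Adjoined_def)
    show "(\<Sum>p\<le>c. card (Singleton p \<union> Adjoined p)) = (\<Sum>p\<le>c. card (Singleton p) + card (Adjoined p))"
      using fin by (intro sum.cong refl card_Un_disjoint) (auto simp: Singleton_def Adjoined_def)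
  qed (use fin in auto)
  also have "\<dots> = (\<Sum>p\<le>c. if p = 0 then num_avoiders m c t + num_avoiders m (Suc c) (Suc t)
                    else if t < p then num_avoiders m c p + num_avoiders m (Suc c) p else 0)"
    using card_avoiders_singleton_at[of _ c m t] card_avoiders_adjoin_at[of _ "Suc c" m t]
    by (intro sum.cong) (auto simp: Singleton_def Adjoined_def)
  finally show ?thesis by (simp only: sum_if_zero_or_above)
qed

lemma num_avoiders_eq_0_if_prefix_too_long:
  assumes "c < t"
  shows "num_avoiders m c t = 0"
proof -
  have "avoiders m c t = {}"
  proof (intro equals0I)
    fix Bs assume "Bs \<in> avoiders m c t"
    then have "length Bs = c" "prefix_avoids_12 t Bs"
      by (auto simp: avoiders_def ordered_set_partitions_iff)
    then show False using prefix_avoids_12_length assms by fastforce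
  qed
  then show ?thesis by (simp add: num_avoiders_def)
qed

lemma num_avoiders_prefix_0_eq_1: "num_avoiders m (Suc c) 0 = num_avoiders m (Suc c) 1"
proof -
  have "prefix_avoids_12 1 Bs" if "Bs \<in> ordered_set_partitions m (Suc c)" for Bs
    using that by (simp add: prefix_avoids_12_def ordered_set_partitions_iff)
  then have "avoiders m (Suc c) 0 = avoiders m (Suc c) 1" by (auto simp: avoiders_def)
  then show ?thesis by (simp add: num_avoiders_def)
qed

lemma num_avoiders_0_0_0: "num_avoiders 0 0 0 = 1"
proof -
  have "avoiders 0 0 0 = {[]}"
    by (auto simp: avoiders_def ordered_set_partitions_iff avoids_123_def)
  then show ?thesis by (simp add: num_avoiders_def)
qed

lemma num_avoiders_0_Suc: "num_avoiders 0 (Suc c) t = 0"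
proof -
  have "avoiders 0 (Suc c) t = {}"
  proof (intro equals0I)
    fix Bs assume "Bs \<in> avoiders 0 (Suc c) t"
    then have "length Bs = Suc c" "{} \<notin> set Bs" "\<Union>(set Bs) = {}"
      by (auto simp: avoiders_def ordered_set_partitions_iff)
    then show False by (cases Bs) auto
  qed
  then show ?thesis by (simp add: num_avoiders_def)
qed

lemma num_avoiders_Suc_0: "num_avoiders (Suc m) 0 t = 0"
  by (simp add: num_avoiders_def avoiders_def ordered_set_partitions_def)

lemma num_avoiders_eq_0_if_less: "m < c \<Longrightarrow> num_avoiders m c t = 0"
proof (induction m arbitrary: c t)
  case 0
  then show ?case by (cases c) (auto simp: num_avoiders_0_Suc)
next
  case (Suc m)
  then obtain c' where c: "c = Suc c'" by (cases c) auto
  have IH: "num_avoiders m c' s = 0" "num_avoiders m (Suc c') s = 0" for s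
    using Suc c by auto
  show ?case
  proof (cases t)
    case 0
    then show ?thesis
      using num_avoiders_prefix_0_eq_1[of "Suc m" c'] num_avoiders_Suc_Suc_Suc[of m c' 0] IH c by simp
  next
    case (Suc t')
    then show ?thesis using num_avoiders_Suc_Suc_Suc[of m c' t'] IH c by simp
  qed
qed

lemma sum_atLeast_Suc_atMost_peel:
  assumes "\<not> Suc t \<le> c \<Longrightarrow> f (Suc t) = (0::nat)"
  shows "(\<Sum>p = Suc t..c. f p) = f (Suc t) + (\<Sum>p = Suc (Suc t)..c. f p)"
  using assms by (cases "Suc t \<le> c") (simp_all add: sum.atLeast_Suc_atMost)

lemma num_avoiders_perm_step:
  "num_avoiders (Suc m) (Suc m) (Suc t) = num_avoiders m m t + num_avoiders (Suc m) (Suc m) (Suc (Suc t))"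
proof -
  have "(\<Sum>p = Suc t..m. num_avoiders m m p) =
        num_avoiders m m (Suc t) + (\<Sum>p = Suc (Suc t)..m. num_avoiders m m p)"
    by (rule sum_atLeast_Suc_atMost_peel) (simp add: num_avoiders_eq_0_if_prefix_too_long)
  then show ?thesis
    using num_avoiders_Suc_Suc_Suc[of m m t] num_avoiders_Suc_Suc_Suc[of m m "Suc t"]
    by (simp add: num_avoiders_eq_0_if_less)
qed

lemma num_avoiders_step:
  assumes "t < c"
  shows "num_avoiders (Suc m) (Suc c) (Suc t) + num_avoiders m (Suc c) (Suc (Suc t)) =
         num_avoiders (Suc m) (Suc c) (Suc (Suc t)) + num_avoiders m c t + 2 * num_avoiders m (Suc c) (Suc t)"
proof -
  have "(\<Sum>p = Suc t..c. num_avoiders m c p + num_avoiders m (Suc c) p) =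
        num_avoiders m c (Suc t) + num_avoiders m (Suc c) (Suc t) +
        (\<Sum>p = Suc (Suc t)..c. num_avoiders m c p + num_avoiders m (Suc c) p)"
    by (rule sum_atLeast_Suc_atMost_peel) (use assms in simp)
  then show ?thesis
    using num_avoiders_Suc_Suc_Suc[of m c t] num_avoiders_Suc_Suc_Suc[of m c "Suc t"] by simp
qed

lemma num_avoiders_perm_full_prefix: "num_avoiders m m m = 1"
proof (induction m)
  case 0
  then show ?case by (simp add: num_avoiders_0_0_0)
next
  case (Suc m)
  then show ?case
    using num_avoiders_perm_step[of m m] num_avoiders_eq_0_if_prefix_too_long[of "Suc m" "Suc (Suc m)"]
    by simp
qed

lemma num_avoiders_one_short_full_prefix: "num_avoiders (Suc (Suc q)) (Suc q) (Suc q) = Suc q"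
proof (induction q)
  case 0
  then show ?case
    using num_avoiders_Suc_Suc_Suc[of "Suc 0" 0 0] num_avoiders_perm_full_prefix[of "Suc 0"]
    by (simp add: num_avoiders_Suc_0)
next
  case (Suc q)
  then show ?case
    using num_avoiders_Suc_Suc_Suc[of "Suc (Suc q)" "Suc q" "Suc q"]
      num_avoiders_perm_full_prefix[of "Suc (Suc q)"]
    by simp
qed

section \<open>Closed forms\<close>

lemma binomial_odd_middle: "(Suc k + k) choose k = (Suc k + k) choose Suc k"
  using binomial_symmetric[of k "Suc k + k"] by simp

definition ballot :: "nat \<Rightarrow> nat \<Rightarrow> int" where
  "ballot m j = int ((m + j) choose m) - int ((m + j) choose Suc m)"

lemma ballot_eq: "m + j = K \<Longrightarrow> ballot m j = int (K choose m) - int (K choose Suc m)"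
  unfolding ballot_def by simp

lemma ballot_Suc_Suc: "ballot (Suc k) (Suc j) = ballot (Suc k) j + ballot k (Suc j)"
proof -
  have K: "Suc k + Suc j = Suc (k + Suc j)" "Suc k + j = k + Suc j" by simp_all
  show ?thesis unfolding ballot_eq[OF K(1)] ballot_eq[OF K(2)] ballot_def by simp
qed

lemma ballot_diag: "ballot (Suc k) (Suc k) = ballot (Suc k) k"
proof -
  define n where "n = Suc k + k"
  have K: "Suc k + Suc k = Suc n" "Suc k + k = n" by (simp_all add: n_def)
  have "n choose k = n choose Suc k" unfolding n_def by (rule binomial_odd_middle)
  then show ?thesis unfolding ballot_eq[OF K(1)] ballot_eq[OF K(2)] binomial_Suc_Suc by simp
qed

lemma num_avoiders_perm: "j < m \<Longrightarrow> int (num_avoiders m m (m - j)) = ballot m j"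
proof (induction m arbitrary: j)
  case 0
  then show ?case by simp
next
  case (Suc k)
  note outer_IH = Suc.IH
  show ?case using Suc.prems
  proof (induction j)
    case 0
    show ?case using num_avoiders_perm_full_prefix[of "Suc k"] by (simp add: ballot_def)
  next
    case (Suc j)
    then have "j < k" by simp
    define t where "t = k - Suc j"
    have t: "Suc k - Suc j = Suc t" "Suc k - j = Suc (Suc t)" using \<open>j < k\<close> by (simp_all add: t_def)
    have lower: "int (num_avoiders k k t) = ballot k (Suc j)"
    proof (cases "Suc j < k")
      case True
      then show ?thesis using outer_IH[of "Suc j"] by (simp add: t_def)
    next
      case False
      then have "k = Suc j" "t = 0" using \<open>j < k\<close> by (simp_all add: t_def)
      then show ?thesis
        using outer_IH[of j] num_avoiders_prefix_0_eq_1[of k j] ballot_diag[of j] by simp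
    qed
    have "int (num_avoiders (Suc k) (Suc k) (Suc k - Suc j)) = ballot k (Suc j) + ballot (Suc k) j"
      using num_avoiders_perm_step[of k t] lower Suc.IH \<open>j < k\<close> t by simp
    then show ?case using ballot_Suc_Suc[of k j] by simp
  qed
qed

definition pair_block_formula :: "nat \<Rightarrow> nat \<Rightarrow> int" where
  "pair_block_formula q j =
     - int ((Suc q + j) choose q) + 2 * (int q + 1 - int j) * int ((Suc q + j) choose Suc q)
     + (int q + 3 - int j) * int ((Suc q + j) choose Suc (Suc q))
     + 2 * int ((Suc q + j) choose Suc (Suc (Suc q)))"

lemma pair_block_formula_eq:
  "Suc q + j = K \<Longrightarrow> pair_block_formula q j =
     - int (K choose q) + 2 * (int q + 1 - int j) * int (K choose Suc q)
     + (int q + 3 - int j) * int (K choose Suc (Suc q)) + 2 * int (K choose Suc (Suc (Suc q)))"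
  unfolding pair_block_formula_def by simp

lemma pair_block_formula_Suc_Suc:
  "pair_block_formula (Suc q) (Suc j) + ballot (Suc (Suc q)) j =
   pair_block_formula (Suc q) j + pair_block_formula q (Suc j) + 2 * ballot (Suc (Suc q)) (Suc j)"
proof -
  define K where "K = q + j + 2"
  have K: "Suc (Suc q) + Suc j = Suc K" "Suc (Suc q) + j = K" "Suc q + Suc j = K"
    by (simp_all add: K_def)
  show ?thesis
    unfolding pair_block_formula_eq[OF K(1)] pair_block_formula_eq[OF K(2)] pair_block_formula_eq[OF K(3)]
      ballot_eq[OF K(1)] ballot_eq[OF K(2)] binomial_Suc_Suc of_nat_add of_nat_Suc
    by (simp add: algebra_simps)
qed

lemma pair_block_formula_diag: "pair_block_formula q (Suc q) = pair_block_formula q q"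
proof (cases q)
  case 0
  then show ?thesis by (simp add: pair_block_formula_def)
next
  case (Suc r)
  define n where "n = Suc q + q"
  have K: "Suc q + Suc q = Suc n" "Suc q + q = n" by (simp_all add: n_def)
  have "r \<le> n" "n - r = Suc (Suc q)" using Suc by (simp_all add: n_def)
  then have "n choose r = n choose Suc (Suc q)" using binomial_symmetric[of r n] by simp
  moreover have "Suc n choose q = (n choose r) + (n choose q)" using Suc by simp
  moreover have "n choose q = n choose Suc q" unfolding n_def by (rule binomial_odd_middle)
  ultimately show ?thesis
    unfolding pair_block_formula_eq[OF K(1)] pair_block_formula_eq[OF K(2)] binomial_Suc_Suc of_nat_add
    by (simp add: algebra_simps)
qed

lemma pair_block_formula_0: "pair_block_formula q 0 = int (Suc q)"
proof -
  have K: "Suc q + 0 = Suc q" by simp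
  show ?thesis unfolding pair_block_formula_eq[OF K] by (simp add: binomial_eq_0)
qed

lemma num_avoiders_one_short:
  "j \<le> q \<Longrightarrow> int (num_avoiders (Suc (Suc q)) (Suc q) (Suc q - j)) = pair_block_formula q j"
proof (induction q arbitrary: j)
  case 0
  then show ?case using num_avoiders_one_short_full_prefix[of 0] pair_block_formula_0[of 0] by simp
next
  case (Suc q)
  note outer_IH = Suc.IH
  show ?case using Suc.prems
  proof (induction j)
    case 0
    show ?case
      using num_avoiders_one_short_full_prefix[of "Suc q"] pair_block_formula_0[of "Suc q"] by simp
  next
    case (Suc j)
    then have "j \<le> q" by simp
    define t where "t = q - j"
    have t: "Suc (Suc q) - Suc j = Suc t" "Suc (Suc q) - j = Suc (Suc t)" "t < Suc q"
      using \<open>j \<le> q\<close> by (simp_all add: t_def)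
    have perm: "int (num_avoiders (Suc (Suc q)) (Suc (Suc q)) (Suc (Suc t))) = ballot (Suc (Suc q)) j"
      "int (num_avoiders (Suc (Suc q)) (Suc (Suc q)) (Suc t)) = ballot (Suc (Suc q)) (Suc j)"
      using num_avoiders_perm[of j "Suc (Suc q)"] num_avoiders_perm[of "Suc j" "Suc (Suc q)"] \<open>j \<le> q\<close> t
      by simp_all
    have lower: "int (num_avoiders (Suc (Suc q)) (Suc q) t) = pair_block_formula q (Suc j)"
    proof (cases "j < q")
      case True
      then show ?thesis using outer_IH[of "Suc j"] by (simp add: t_def)
    next
      case False
      then have "j = q" "t = 0" using \<open>j \<le> q\<close> by (simp_all add: t_def)
      then show ?thesis
        using outer_IH[of q] num_avoiders_prefix_0_eq_1[of "Suc (Suc q)" q] pair_block_formula_diag[of q]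
        by simp
    qed
    have "int (num_avoiders (Suc (Suc (Suc q))) (Suc (Suc q)) (Suc t)) =
          pair_block_formula (Suc q) j + pair_block_formula q (Suc j)
          + 2 * ballot (Suc (Suc q)) (Suc j) - ballot (Suc (Suc q)) j"
      using arg_cong[OF num_avoiders_step[OF t(3), of "Suc (Suc q)"], of int] Suc.IH \<open>j \<le> q\<close>
        perm lower t
      by simp
    then show ?case using pair_block_formula_Suc_Suc[of q j] t by simp
  qed
qed

lemma Suc_times_choose_Suc_int: "int (Suc k) * int (n choose Suc k) = (int n - int k) * int (n choose k)"
proof -
  have "int (Suc k) * (int (n choose k) + int (n choose Suc k)) = int (Suc n) * int (n choose k)"
    using Suc_times_binomial[of k n] by (metis binomial_Suc_Suc of_nat_add of_nat_mult)
  then show ?thesis by (simp add: algebra_simps)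
qed

lemma pair_block_formula_diag_closed:
  "(int q + 2) * (int q + 3) * pair_block_formula q q = 6 * (int q + 1)^2 * int ((Suc q + q) choose Suc q)"
proof -
  define n where "n = Suc q + q"
  define B where "B = int (n choose Suc q)"
  define X where "X = int (n choose Suc (Suc q))"
  define Y where "Y = int (n choose Suc (Suc (Suc q)))"
  have K: "Suc q + q = n" by (simp add: n_def)
  have "n choose q = n choose Suc q" unfolding n_def by (rule binomial_odd_middle)
  then have formula: "pair_block_formula q q = B + 3 * X + 2 * Y"
    unfolding pair_block_formula_eq[OF K] B_def X_def Y_def by simp
  have X: "(int q + 2) * X = int q * B"
    using Suc_times_choose_Suc_int[of "Suc q" n] by (simp add: X_def B_def n_def algebra_simps)
  have Y: "(int q + 3) * Y = (int q - 1) * X"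
    using Suc_times_choose_Suc_int[of "Suc (Suc q)" n] by (simp add: X_def Y_def n_def algebra_simps)
  have "2 * (int q + 2) * ((int q + 3) * Y) = 2 * (int q - 1) * ((int q + 2) * X)"
    unfolding Y by (simp add: algebra_simps)
  then have XY: "2 * (int q + 2) * ((int q + 3) * Y) = 2 * (int q - 1) * (int q * B)"
    by (simp only: X)
  have "(int q + 2) * (int q + 3) * pair_block_formula q q =
        (int q + 2) * (int q + 3) * B + 3 * (int q + 3) * ((int q + 2) * X)
        + 2 * (int q + 2) * ((int q + 3) * Y)"
    unfolding formula by (simp add: algebra_simps)
  also have "\<dots> = (int q + 2) * (int q + 3) * B + 3 * (int q + 3) * (int q * B)
        + 2 * (int q - 1) * (int q * B)"
    using XY by (simp only: X)
  also have "\<dots> = 6 * (int q + 1)^2 * B"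
    by (simp add: algebra_simps power2_eq_square)
  finally show ?thesis by (simp add: B_def n_def)
qed

lemma binomial_even_middle: "(2 * Suc k) choose Suc k = 2 * ((Suc k + k) choose Suc k)"
proof -
  have "2 * Suc k = Suc (Suc k + k)" by simp
  then have "(2 * Suc k) choose Suc k = ((Suc k + k) choose k) + ((Suc k + k) choose Suc k)"
    by (simp only: binomial_Suc_Suc)
  then show ?thesis unfolding binomial_odd_middle by simp
qed

lemma op_count_123_one_short:
  "int (op_count (Suc (Suc q)) (Suc q) [1, 2, 3]) = pair_block_formula q q"
  unfolding op_count_123_eq_num_avoiders
  using num_avoiders_one_short[of q q] num_avoiders_prefix_0_eq_1[of "Suc (Suc q)" q] by simp

theorem theorem4:
  fixes n :: nat
  assumes "n \<ge> 1"
  shows "real (op_count n (n - 1) [1, 2, 3]) =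
           3 * (real n - 1)^2 * real ((2*n - 2) choose (n - 1)) / (real n * (real n + 1))"
proof (cases "n = 1")
  case True
  then show ?thesis unfolding op_count_123_eq_num_avoiders by (simp add: num_avoiders_Suc_0)
next
  case False
  define q where "q = n - 2"
  define R where "R = real ((Suc q + q) choose Suc q)"
  have n: "n = Suc (Suc q)" using assms False by (simp add: q_def)
  have "real (op_count n (n - 1) [1, 2, 3]) = real_of_int (pair_block_formula q q)"
    using arg_cong[OF op_count_123_one_short[of q], of real_of_int] n by simp
  then have count: "(real q + 2) * (real q + 3) * real (op_count n (n - 1) [1, 2, 3]) = 6 * (real q + 1)^2 * R"
    using arg_cong[OF pair_block_formula_diag_closed[of q], of real_of_int] by (simp add: R_def)
  have "(2 * n - 2) choose (n - 1) = 2 * ((Suc q + q) choose Suc q)"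
    using binomial_even_middle[of q] n by simp
  then have binom: "real ((2 * n - 2) choose (n - 1)) = 2 * R" by (simp add: R_def)
  have "(real q + 2) * (real q + 3) \<noteq> 0" by simp
  with count show ?thesis
    unfolding binom by (simp add: n field_simps)
qed

end
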